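(* Let $\Lambda_1\geq 0$ and $\Lambda_2>1$. Let $F(z)=\bar{z}G(z)+H(z)$, $z\in\mathbb{D}=\{z:|z|<1\}$, where $G$ and $H$ are analytic in $\mathbb{D}$ with $G(0)=0$, $H(0)=0$, $H'(0)=1$, $|G'(z)|\leq \Lambda_1$ and $|H'(z)|<\Lambda_2$ for all $z\in\mathbb{D}$. Set $$\rho_1=\frac{2\Lambda_2}{\Lambda_2(2\Lambda_1+\Lambda_2)+\sqrt{\Lambda_2^2(2\Lambda_1+\Lambda_2)^2-8\Lambda_1\Lambda_2}},$$ $$F_1(z)=\Lambda_2^2 z-\Lambda_1|z|^2+(\Lambda_2^3-\Lambda_2)\ln\Big(1-\frac{z}{\Lambda_2}\Big),\qquad \sigma_1=F_1(\rho_1)=\Lambda_2^2\rho_1-\Lambda_1\rho_1^2+(\Lambda_2^3-\Lambda_2)\ln\Big(1-\frac{\rho_1}{\Lambda_2}\Big).$$ Then $F$ is univalent in $\mathbb{D}_{\rho_1}$ and $F(\mathbb{D}_{\rho_1})\supseteq\mathbb{D}_{\sigma_1}$. This result is sharp: the function $F_1$ (principal branch of the logarithm) satisfies the hypotheses, is not univalent in $\mathbb{D}_r$ for any $r\in(\rho_1,1]$, and $|F_1(\rho_1)|=\sigma_1$ with $\rho_1\in\partial\mathbb{D}_{\rho_1}$.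
   Context: $\mathbb{D}_r=\{z\in\mathbb{C}:|z|<r\}$. A function of the form $\bar z G(z)+H(z)$ with $G,H$ analytic is called bi-analytic (it satisfies $F_{\bar z\bar z}=0$). *)

theory Defs
  imports "HOL-Analysis.Analysis"
begin

definition rho1 :: "real \<Rightarrow> real \<Rightarrow> real" where
  "rho1 L1 L2 = 2 * L2 /
     (L2 * (2 * L1 + L2) + sqrt (L2\<^sup>2 * (2 * L1 + L2)\<^sup>2 - 8 * L1 * L2))"

definition F1 :: "real \<Rightarrow> real \<Rightarrow> complex \<Rightarrow> complex" where
  "F1 L1 L2 z = of_real (L2\<^sup>2) * z - of_real L1 * of_real ((cmod z)\<^sup>2)
     + of_real (L2 ^ 3 - L2) * Ln (1 - z / of_real L2)"

definition sigma1 :: "real \<Rightarrow> real \<Rightarrow> real" where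
  "sigma1 L1 L2 = L2\<^sup>2 * rho1 L1 L2 - L1 * (rho1 L1 L2)\<^sup>2
     + (L2 ^ 3 - L2) * ln (1 - rho1 L1 L2 / L2)"

end

(*
  Write F(z) = z + K(z) with the remainder K(z) = conj z G(z) + H(z) - z.  We have
  |G(z)| <= L1 |z|, and the Schwarz lemma applied to the Moebius transform
  L2 (H' - 1) / (L2^2 - H') of H' gives |H'(z) - 1| <= (L2^2 - 1) |z| / (L2 - |z|).  Hence
  the real derivative of K at p has operator norm at most
  B(|p|) = 2 L1 |p| + (L2^2 - 1) |p| / (L2 - |p|).  B is increasing on [0, 1], and B(t) < 1
  exactly for t < rho1: clearing the denominator, rho1 is the smaller root of
  2 L1 t^2 - L2 (2 L1 + L2) t + L2.  So K is a contraction on every closed disc of radius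
  r < rho1, which makes F injective on D_rho1.  Integrating B along rays gives
  |K(z)| <= |z| - f(|z|) with f(x) = x - int_0^x B, which is F1 on the real axis; thus
  |F| >= f(rho1) = sigma1 on the circle |z| = rho1, and invariance of domain yields the
  covering statement.  Sharpness: on the real axis F1 = f increases up to rho1 and
  decreases after it.
*)

theory Submission
  imports Defs "HOL-Complex_Analysis.Conformal_Mappings"
begin

section \<open>The remainder of a bi-analytic map\<close>

definition remainder ::
    "(complex \<Rightarrow> complex) \<Rightarrow> (complex \<Rightarrow> complex) \<Rightarrow> complex \<Rightarrow> complex" where
  "remainder G H z = cnj z * G z + (H z - z)"

definition remainder_deriv ::
    "(complex \<Rightarrow> complex) \<Rightarrow> (complex \<Rightarrow> complex) \<Rightarrow> complex \<Rightarrow> complex \<Rightarrow> complex" where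
  "remainder_deriv G H p w = cnj w * G p + cnj p * (deriv G p * w) + (deriv H p - 1) * w"

lemma remainder_has_derivative:
  assumes "G holomorphic_on S" "H holomorphic_on S" "open S" "p \<in> S"
  shows "(remainder G H has_derivative remainder_deriv G H p) (at p)"
proof -
  have "(G has_derivative (*) (deriv G p)) (at p)" "(H has_derivative (*) (deriv H p)) (at p)"
    using assms holomorphic_derivI by (fastforce simp: has_field_derivative_def)+
  then show ?thesis
    unfolding remainder_def remainder_deriv_def[abs_def]
    by (auto intro!: derivative_eq_intros bounded_linear.has_derivative[OF bounded_linear_cnj]
             simp: algebra_simps)
qed

lemma remainder_deriv_scaleR: "remainder_deriv G H p (c *\<^sub>R w) = c *\<^sub>R remainder_deriv G H p w"
  by (simp add: remainder_deriv_def scaleR_conv_of_real algebra_simps)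

lemma norm_one_minus_mult_less:
  fixes u :: complex and L :: real
  assumes "1 < \<bar>L\<bar>" "norm u < 1"
  shows "norm (1 - of_real L * u) < norm (of_real L - u)"
proof -
  have "1 < \<bar>L\<bar>\<^sup>2" using assms(1) by (rule one_less_power) simp
  moreover have "(norm u)\<^sup>2 < 1" using assms(2) by (simp add: power_less_one_iff)
  ultimately have "0 < (L\<^sup>2 - 1) * (1 - (norm u)\<^sup>2)" by simp
  also have "\<dots> = (norm (of_real L - u))\<^sup>2 - (norm (1 - of_real L * u))\<^sup>2"
    unfolding cmod_power2 by (simp add: power2_eq_square algebra_simps)
  finally show ?thesis by (simp add: power_less_imp_less_base)
qed

lemma Schwarz_norm_diff_one_le:
  fixes h :: "complex \<Rightarrow> complex"
  assumes h: "h holomorphic_on ball 0 1" "h 0 = 1"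
    and bound: "\<And>z. norm z < 1 \<Longrightarrow> norm (h z) < L" and "1 < L" and z: "norm z < 1"
  shows "norm (h z - 1) \<le> (L\<^sup>2 - 1) * norm z / (L - norm z)"
proof -
  have moebius: "L * norm (h u - 1) < norm (of_real (L\<^sup>2) - h u)" if "norm u < 1" for u
  proof -
    have "norm (1 - of_real L * (h u / of_real L)) < norm (of_real L - h u / of_real L)"
      using \<open>1 < L\<close> bound[OF that] by (intro norm_one_minus_mult_less) (auto simp: norm_divide)
    moreover have "of_real L - h u / of_real L = (of_real (L\<^sup>2) - h u) / of_real L"
      using \<open>1 < L\<close> by (simp add: field_simps power2_eq_square)
    ultimately show ?thesis
      using \<open>1 < L\<close> by (simp add: norm_minus_commute norm_divide pos_less_divide_eq mult.commute)
  qed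
  have nonzero: "of_real (L\<^sup>2) - h u \<noteq> 0" if "norm u < 1" for u
    using moebius[OF that] \<open>1 < L\<close> by (smt (verit) mult_nonneg_nonneg norm_ge_zero norm_zero)
  define g where "g u = of_real L * (h u - 1) / (of_real (L\<^sup>2) - h u)" for u
  have "g holomorphic_on ball 0 1"
    unfolding g_def using h nonzero by (auto intro!: holomorphic_intros)
  moreover have "norm (g u) < 1" if "norm u < 1" for u
    using moebius[OF that] nonzero[OF that] \<open>1 < L\<close>
    by (simp add: g_def norm_divide norm_mult divide_less_eq)
  ultimately have "norm (g z) \<le> norm z"
    using Schwarz_Lemma(1)[of g z] z h(2) by (simp add: g_def)
  then have "L * norm (h z - 1) \<le> norm z * norm (of_real (L\<^sup>2) - h z)"
    using nonzero[OF z] \<open>1 < L\<close> by (simp add: g_def norm_divide norm_mult divide_le_eq mult.commute)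
  also have "\<dots> \<le> norm z * ((L\<^sup>2 - 1) + norm (h z - 1))"
  proof -
    have "norm (of_real (L\<^sup>2) - h z) = norm (of_real (L\<^sup>2 - 1) - (h z - 1))" by simp
    also have "\<dots> \<le> norm (of_real (L\<^sup>2 - 1) :: complex) + norm (h z - 1)"
      by (rule norm_triangle_ineq4)
    also have "norm (of_real (L\<^sup>2 - 1) :: complex) = L\<^sup>2 - 1"
      unfolding norm_of_real using one_less_power[OF \<open>1 < L\<close>, of 2] by simp
    finally show ?thesis by (simp add: mult_left_mono)
  qed
  finally show ?thesis
    using z \<open>1 < L\<close> by (simp add: field_simps)
qed

lemma ball_subset_image_ball:
  fixes f :: "'a::euclidean_space \<Rightarrow> 'a"
  assumes cont: "continuous_on (cball 0 r) f" and inj: "inj_on f (ball 0 r)"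
    and "0 < r" "f 0 = 0" and boundary: "\<And>z. norm z = r \<Longrightarrow> s \<le> norm (f z)"
  shows "ball 0 s \<subseteq> f ` ball 0 r"
proof
  fix w :: 'a assume w: "w \<in> ball 0 s"
  define U where "U = f ` ball 0 r"
  have "open U"
    unfolding U_def using continuous_on_subset[OF cont ball_subset_cball] inj
    by (intro invariance_of_domain) auto
  have "closure U \<subseteq> f ` cball 0 r"
    unfolding U_def using cont
    by (intro closure_minimal compact_imp_closed compact_continuous_image) auto
  then have "frontier U \<subseteq> f ` cball 0 r - f ` ball 0 r"
    using \<open>open U\<close> by (auto simp: frontier_def interior_open U_def)
  also have "\<dots> \<subseteq> f ` sphere 0 r" by force
  finally have "frontier U \<subseteq> f ` sphere 0 r" .
  then have "ball 0 s \<inter> frontier U = {}"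
    using boundary by fastforce
  moreover have "0 \<in> ball 0 s"
    using w by (auto intro: le_less_trans[OF norm_ge_zero])
  moreover have "0 \<in> U"
    using \<open>0 < r\<close> \<open>f 0 = 0\<close> by (auto simp: U_def intro: image_eqI[of _ _ 0])
  ultimately have "ball 0 s - U = {}"
    using connected_Int_frontier[OF connected_ball] by blast
  then show "w \<in> f ` ball 0 r" using w U_def by blast
qed

section \<open>Real-variable estimates\<close>

lemma rho1_discriminant_pos:
  fixes L1 L2 :: real
  assumes "L1 \<ge> 0" "L2 > 1"
  shows "0 < L2\<^sup>2 * (2 * L1 + L2)\<^sup>2 - 8 * L1 * L2"
proof -
  have "1 < L2\<^sup>2" using assms(2) by (rule one_less_power) simp
  moreover have "L2\<^sup>2 * (2 * L1 + L2)\<^sup>2 - 8 * L1 * L2 = (L2 * (2 * L1 + L2) - 2)\<^sup>2 + 4 * L2\<^sup>2 - 4"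
    by (simp add: power2_eq_square algebra_simps)
  ultimately show ?thesis by (smt (verit) zero_le_power2)
qed

lemma rho1_root:
  assumes "L1 \<ge> 0" "L2 > 1"
  shows "2 * L1 * (rho1 L1 L2)\<^sup>2 - L2 * (2 * L1 + L2) * rho1 L1 L2 + L2 = 0"
proof -
  define A where "A = L2 * (2 * L1 + L2)"
  define S where "S = sqrt (L2\<^sup>2 * (2 * L1 + L2)\<^sup>2 - 8 * L1 * L2)"
  have S2: "S\<^sup>2 = A\<^sup>2 - 8 * L1 * L2"
    using rho1_discriminant_pos[OF assms] by (simp add: S_def A_def power_mult_distrib)
  define X where "X = A + S"
  have pos: "0 < X"
    using assms rho1_discriminant_pos[OF assms] by (simp add: X_def A_def S_def add_pos_pos)
  have rho1: "rho1 L1 L2 = 2 * L2 / X" by (simp add: rho1_def X_def A_def S_def)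
  have "(2 * L1 * (rho1 L1 L2)\<^sup>2 - A * rho1 L1 L2 + L2) * X\<^sup>2
      = 8 * L1 * L2\<^sup>2 - 2 * A * L2 * X + L2 * X\<^sup>2"
    unfolding rho1 using pos by (simp add: field_simps power2_eq_square)
  also have "\<dots> = L2 * (8 * L1 * L2 - A\<^sup>2 + S\<^sup>2)"
    by (simp add: X_def power2_eq_square algebra_simps)
  also have "\<dots> = 0" by (simp add: S2)
  finally show ?thesis using pos by (simp add: A_def)
qed

lemma rho1_bounds:
  assumes "L1 \<ge> 0" "L2 > 1"
  shows "0 < rho1 L1 L2" "rho1 L1 L2 < 1"
proof -
  define A where "A = L2 * (2 * L1 + L2)"
  define S where "S = sqrt (L2\<^sup>2 * (2 * L1 + L2)\<^sup>2 - 8 * L1 * L2)"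
  have S2: "S\<^sup>2 = A\<^sup>2 - 8 * L1 * L2"
    using rho1_discriminant_pos[OF assms] by (simp add: S_def A_def power_mult_distrib)
  have "0 < A" "0 < S"
    using assms rho1_discriminant_pos[OF assms] by (simp_all add: A_def S_def)
  have rho1: "rho1 L1 L2 = 2 * L2 / (A + S)" by (simp add: rho1_def A_def S_def)
  then show "0 < rho1 L1 L2" using \<open>0 < A\<close> \<open>0 < S\<close> assms by simp
  have "2 * L2 < A + S"
  proof (cases "2 * L2 \<le> A")
    case False
    have "S\<^sup>2 - (2 * L2 - A)\<^sup>2 = 4 * L2 * (L2 - 1) * (2 * L1 + L2)"
      unfolding S2 A_def by (simp add: power2_eq_square algebra_simps)
    also have "\<dots> > 0" using assms by simp
    finally have "2 * L2 - A < S"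
      using \<open>0 < S\<close> by (smt (verit) power_mono)
    then show ?thesis by simp
  qed (use \<open>0 < S\<close> in simp)
  then show "rho1 L1 L2 < 1" using rho1 \<open>0 < A\<close> \<open>0 < S\<close> by simp
qed

definition remainder_deriv_bound :: "real \<Rightarrow> real \<Rightarrow> real \<Rightarrow> real" where
  "remainder_deriv_bound L1 L2 t = 2 * L1 * t + (L2\<^sup>2 - 1) * t / (L2 - t)"

lemma remainder_deriv_bound_mono:
  assumes "L1 \<ge> 0" "L2 > 1" "0 \<le> s" "s \<le> t" "t < L2"
  shows "remainder_deriv_bound L1 L2 s \<le> remainder_deriv_bound L1 L2 t"
proof -
  have "s / (L2 - s) \<le> t / (L2 - t)" using assms by (simp add: frac_le)
  moreover have "1 \<le> L2\<^sup>2" using assms by (simp add: one_le_power)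
  ultimately have "(L2\<^sup>2 - 1) * (s / (L2 - s)) \<le> (L2\<^sup>2 - 1) * (t / (L2 - t))"
    by (intro mult_left_mono) auto
  moreover have "L1 * s \<le> L1 * t" using assms by (simp add: mult_left_mono)
  ultimately show ?thesis by (simp add: remainder_deriv_bound_def)
qed

lemma one_minus_remainder_deriv_bound:
  assumes "L1 \<ge> 0" "L2 > 1" "t \<le> 1"
  obtains c where "0 < c" "1 - remainder_deriv_bound L1 L2 t = c * (rho1 L1 L2 - t)"
proof -
  define \<rho> where "\<rho> = rho1 L1 L2"
  define c where "c x = L2 * (2 * L1 + L2) - 2 * L1 * (x + \<rho>)" for x
  have factor: "2 * L1 * x\<^sup>2 - L2 * (2 * L1 + L2) * x + L2 = (\<rho> - x) * c x" for x
    using rho1_root[OF assms(1,2)]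
    by (simp add: \<rho>_def c_def power2_eq_square algebra_simps)
  have "(\<rho> - 1) * c 1 = (1 - L2) * (2 * L1 + L2)"
    using factor[of 1] by (simp add: algebra_simps)
  also have "\<dots> < 0" using assms by (simp add: mult_neg_pos)
  finally have "0 < c 1"
    using rho1_bounds[OF assms(1,2)] by (simp add: \<rho>_def mult_less_0_iff)
  moreover have "c 1 \<le> c t" using assms by (simp add: c_def mult_left_mono)
  ultimately have "0 < c t / (L2 - t)" using assms by simp
  moreover have "1 - remainder_deriv_bound L1 L2 t = c t / (L2 - t) * (\<rho> - t)"
    using factor[of t] assms
    by (simp add: remainder_deriv_bound_def field_simps power2_eq_square)
  ultimately show ?thesis using that by (simp add: \<rho>_def)
qed

lemma remainder_deriv_bound_less_1:
  assumes "L1 \<ge> 0" "L2 > 1" "t < rho1 L1 L2"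
  shows "remainder_deriv_bound L1 L2 t < 1"
proof -
  have "t \<le> 1" using assms rho1_bounds[OF assms(1,2)] by simp
  then obtain c where "0 < c" "1 - remainder_deriv_bound L1 L2 t = c * (rho1 L1 L2 - t)"
    using one_minus_remainder_deriv_bound assms by blast
  then show ?thesis using assms by (smt (verit) mult_pos_pos)
qed

lemma remainder_deriv_bound_greater_1:
  assumes "L1 \<ge> 0" "L2 > 1" "rho1 L1 L2 < t" "t \<le> 1"
  shows "1 < remainder_deriv_bound L1 L2 t"
proof -
  obtain c where "0 < c" "1 - remainder_deriv_bound L1 L2 t = c * (rho1 L1 L2 - t)"
    using one_minus_remainder_deriv_bound assms by blast
  then show ?thesis using assms by (smt (verit) mult_pos_neg)
qed

definition F1_radial :: "real \<Rightarrow> real \<Rightarrow> real \<Rightarrow> real" where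
  "F1_radial L1 L2 x = L2\<^sup>2 * x - L1 * x\<^sup>2 + (L2 ^ 3 - L2) * ln (1 - x / L2)"

lemma F1_radial_has_derivative:
  assumes "L2 > 1" "x < L2"
  shows "(F1_radial L1 L2 has_real_derivative 1 - remainder_deriv_bound L1 L2 x) (at x)"
proof -
  have "0 < 1 - x / L2" using assms by simp
  then have deriv: "(F1_radial L1 L2 has_real_derivative
      L2\<^sup>2 - L1 * (2 * x) + (L2 ^ 3 - L2) * (- (1 / L2) / (1 - x / L2))) (at x)"
    unfolding F1_radial_def using assms
    by (auto intro!: derivative_eq_intros simp: power2_eq_square)
  have "(L2 ^ 3 - L2) * (- (1 / L2) / (1 - x / L2)) = - (L2\<^sup>2 - 1) - (L2\<^sup>2 - 1) * x / (L2 - x)"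
    using assms by (simp add: field_simps power2_eq_square power3_eq_cube)
  then have "L2\<^sup>2 - L1 * (2 * x) + (L2 ^ 3 - L2) * (- (1 / L2) / (1 - x / L2))
      = 1 - remainder_deriv_bound L1 L2 x"
    by (simp add: remainder_deriv_bound_def)
  then show ?thesis using deriv by simp
qed

lemma id_minus_F1_radial_has_derivative:
  assumes "L2 > 1" "x < L2"
  shows "((\<lambda>s. s - F1_radial L1 L2 s) has_real_derivative remainder_deriv_bound L1 L2 x) (at x)"
  using DERIV_diff[OF DERIV_ident F1_radial_has_derivative[OF assms]] by simp

lemma F1_radial_continuous_on:
  assumes "L2 > 1" "b < L2"
  shows "continuous_on {a..b} (F1_radial L1 L2)"
proof (rule DERIV_continuous_on)
  fix x assume "x \<in> {a..b}"
  then show "(F1_radial L1 L2 has_real_derivative 1 - remainder_deriv_bound L1 L2 x) (at x within {a..b})"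
    using F1_radial_has_derivative[of L2 x L1] assms by (auto intro: has_field_derivative_at_within)
qed

lemma F1_radial_strict_mono:
  assumes "L1 \<ge> 0" "L2 > 1" "a < b" "b \<le> rho1 L1 L2"
  shows "F1_radial L1 L2 a < F1_radial L1 L2 b"
proof (rule DERIV_pos_imp_increasing_open[OF \<open>a < b\<close>])
  have "rho1 L1 L2 < L2" using rho1_bounds[OF assms(1,2)] assms by simp
  then show "continuous_on {a..b} (F1_radial L1 L2)"
    using assms by (intro F1_radial_continuous_on) auto
  fix x assume "a < x" "x < b"
  then have "x < L2" "remainder_deriv_bound L1 L2 x < 1"
    using \<open>rho1 L1 L2 < L2\<close> remainder_deriv_bound_less_1[of L1 L2 x] assms by auto
  then show "\<exists>y. (F1_radial L1 L2 has_real_derivative y) (at x) \<and> 0 < y"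
    using F1_radial_has_derivative[OF assms(2) \<open>x < L2\<close>, of L1] by auto
qed

lemma F1_radial_strict_antimono:
  assumes "L1 \<ge> 0" "L2 > 1" "rho1 L1 L2 \<le> a" "a < b" "b \<le> 1"
  shows "F1_radial L1 L2 b < F1_radial L1 L2 a"
proof (rule DERIV_neg_imp_decreasing_open[OF \<open>a < b\<close>])
  show "continuous_on {a..b} (F1_radial L1 L2)"
    using assms by (intro F1_radial_continuous_on) auto
  fix x assume "a < x" "x < b"
  then show "\<exists>y. (F1_radial L1 L2 has_real_derivative y) (at x) \<and> y < 0"
    using F1_radial_has_derivative[of L2 x L1] remainder_deriv_bound_greater_1[of L1 L2 x] assms
    by auto
qed

section \<open>Injectivity and covering\<close>

locale bianalytic_bounded =
  fixes L1 L2 :: real and G H F :: "complex \<Rightarrow> complex"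
  assumes L1_nonneg: "L1 \<ge> 0" and L2_gt_1: "L2 > 1"
    and G_analytic: "G analytic_on ball 0 1" and H_analytic: "H analytic_on ball 0 1"
    and G_0: "G 0 = 0" and H_0: "H 0 = 0" and deriv_H_0: "deriv H 0 = 1"
    and norm_deriv_G_le: "\<forall>z\<in>ball 0 1. cmod (deriv G z) \<le> L1"
    and norm_deriv_H_less: "\<forall>z\<in>ball 0 1. cmod (deriv H z) < L2"
    and F_eq: "\<forall>z\<in>ball 0 1. F z = cnj z * G z + H z"
begin

lemma G_holomorphic: "G holomorphic_on ball 0 1"
  using G_analytic by (rule analytic_imp_holomorphic)

lemma H_holomorphic: "H holomorphic_on ball 0 1"
  using H_analytic by (rule analytic_imp_holomorphic)

lemma F_eq_remainder: "cmod z < 1 \<Longrightarrow> F z = z + remainder G H z"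
  using F_eq by (simp add: remainder_def)

lemma norm_G_le:
  assumes "cmod z < 1"
  shows "cmod (G z) \<le> L1 * cmod z"
proof -
  have "cmod (G z - G 0) \<le> L1 * cmod (z - 0)"
    using assms norm_deriv_G_le holomorphic_derivI[OF G_holomorphic]
    by (intro field_differentiable_bound[of "ball 0 1"]) auto
  then show ?thesis using G_0 by simp
qed

lemma norm_deriv_H_minus_1_le:
  assumes "cmod z < 1"
  shows "cmod (deriv H z - 1) \<le> (L2\<^sup>2 - 1) * cmod z / (L2 - cmod z)"
  using holomorphic_deriv[OF H_holomorphic] deriv_H_0 norm_deriv_H_less L2_gt_1 assms
  by (intro Schwarz_norm_diff_one_le) auto

lemma norm_remainder_deriv_le:
  assumes "cmod p < 1"
  shows "cmod (remainder_deriv G H p w) \<le> remainder_deriv_bound L1 L2 (cmod p) * cmod w"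
proof -
  have "cmod (remainder_deriv G H p w)
      \<le> cmod w * cmod (G p) + cmod p * (cmod (deriv G p) * cmod w) + cmod (deriv H p - 1) * cmod w"
    unfolding remainder_deriv_def
    by (metis norm_triangle_le norm_triangle_ineq add_mono norm_mult complex_mod_cnj order_refl)
  also have "\<dots> \<le> cmod w * (L1 * cmod p) + cmod p * (L1 * cmod w)
      + (L2\<^sup>2 - 1) * cmod p / (L2 - cmod p) * cmod w"
    using assms norm_G_le norm_deriv_G_le norm_deriv_H_minus_1_le
    by (intro add_mono mult_left_mono mult_right_mono) auto
  also have "\<dots> = remainder_deriv_bound L1 L2 (cmod p) * cmod w"
    by (simp add: remainder_deriv_bound_def algebra_simps)
  finally show ?thesis .
qed

lemma remainder_has_derivative_ball:
  "cmod p < 1 \<Longrightarrow> (remainder G H has_derivative remainder_deriv G H p) (at p)"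
  using G_holomorphic H_holomorphic by (intro remainder_has_derivative) auto

lemma remainder_lipschitz:
  assumes "r < 1" "z1 \<in> cball 0 r" "z2 \<in> cball 0 r"
  shows "cmod (remainder G H z1 - remainder G H z2)
           \<le> remainder_deriv_bound L1 L2 r * cmod (z1 - z2)"
proof (rule differentiable_bound[OF convex_cball, where f = "remainder G H"
                                                    and f' = "remainder_deriv G H"])
  fix p :: complex assume p: "p \<in> cball 0 r"
  then have "cmod p < 1" using assms by simp
  then show "(remainder G H has_derivative remainder_deriv G H p) (at p within cball 0 r)"
    by (rule has_derivative_at_withinI[OF remainder_has_derivative_ball])
  have "remainder_deriv_bound L1 L2 (cmod p) \<le> remainder_deriv_bound L1 L2 r"
    using p assms L1_nonneg L2_gt_1 by (intro remainder_deriv_bound_mono) auto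
  then show "onorm (remainder_deriv G H p) \<le> remainder_deriv_bound L1 L2 r"
  proof (intro onorm_le)
    fix w
    have "cmod (remainder_deriv G H p w) \<le> remainder_deriv_bound L1 L2 (cmod p) * cmod w"
      using norm_remainder_deriv_le[OF \<open>cmod p < 1\<close>] .
    also have "\<dots> \<le> remainder_deriv_bound L1 L2 r * cmod w"
      using \<open>remainder_deriv_bound L1 L2 (cmod p) \<le> remainder_deriv_bound L1 L2 r\<close>
      by (rule mult_right_mono) simp
    finally show "norm (remainder_deriv G H p w) \<le> remainder_deriv_bound L1 L2 r * norm w" .
  qed
qed (use assms in simp_all)

lemma remainder_on_ray_has_vector_derivative:
  assumes "cmod u = 1" "0 \<le> s" "s < 1"
  shows "((\<lambda>s. remainder G H (s *\<^sub>R u)) has_vector_derivative remainder_deriv G H (s *\<^sub>R u) u)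
           (at s)"
proof -
  have "cmod (s *\<^sub>R u) < 1" using assms by simp
  have "((\<lambda>s. s *\<^sub>R u) has_derivative (\<lambda>h. h *\<^sub>R u)) (at s)"
    by (auto intro!: derivative_eq_intros)
  from diff_chain_at[OF this remainder_has_derivative_ball[OF \<open>cmod (s *\<^sub>R u) < 1\<close>]]
  show ?thesis by (simp add: o_def has_vector_derivative_def remainder_deriv_scaleR)
qed

lemma norm_remainder_le:
  assumes "cmod z < 1"
  shows "cmod (remainder G H z) \<le> cmod z - F1_radial L1 L2 (cmod z)"
proof (cases "z = 0")
  case True
  then show ?thesis by (simp add: remainder_def G_0 H_0 F1_radial_def)
next
  case False
  define u where "u = sgn z"
  have "cmod u = 1" using False by (simp add: u_def norm_sgn)
  define f where "f s = remainder G H (s *\<^sub>R u)" for s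
  define \<phi> where "\<phi> s = s - F1_radial L1 L2 s" for s
  note f_deriv = remainder_on_ray_has_vector_derivative[OF \<open>cmod u = 1\<close>, folded f_def]
  note \<phi>_deriv = id_minus_F1_radial_has_derivative[OF L2_gt_1, of _ L1, folded \<phi>_def]
  have "cmod (f (cmod z) - f 0) \<le> \<phi> (cmod z) - \<phi> 0"
  proof (rule differentiable_bound_general[of 0 "cmod z" f \<phi>])
    show "continuous_on {0..cmod z} f"
    proof (intro continuous_at_imp_continuous_on ballI)
      fix s assume "s \<in> {0..cmod z}"
      then show "isCont f s"
        using f_deriv[of s] assms by (auto intro: has_vector_derivative_continuous)
    qed
    show "continuous_on {0..cmod z} \<phi>"
    proof (intro continuous_at_imp_continuous_on ballI)
      fix s assume "s \<in> {0..cmod z}"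
      then show "isCont \<phi> s"
        using \<phi>_deriv[of s] assms L2_gt_1 by (auto intro: DERIV_isCont)
    qed
    fix s assume s: "0 < s" "s < cmod z"
    then show "(f has_vector_derivative remainder_deriv G H (s *\<^sub>R u) u) (at s)"
      using f_deriv assms by simp
    show "(\<phi> has_vector_derivative remainder_deriv_bound L1 L2 s) (at s)"
      using \<phi>_deriv s assms L2_gt_1
      by (simp add: has_real_derivative_iff_has_vector_derivative[symmetric])
    show "cmod (remainder_deriv G H (s *\<^sub>R u) u) \<le> remainder_deriv_bound L1 L2 s"
      using norm_remainder_deriv_le[of "s *\<^sub>R u" u] s assms \<open>cmod u = 1\<close> by simp
  qed (use False in simp)
  moreover have "f (cmod z) = remainder G H z" "f 0 = 0" "\<phi> 0 = 0"
    using False by (simp_all add: f_def u_def sgn_div_norm remainder_def G_0 H_0 \<phi>_def F1_radial_def)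
  ultimately show ?thesis by (simp add: \<phi>_def)
qed

lemma inj_on_ball_rho1: "inj_on F (ball 0 (rho1 L1 L2))"
proof (rule inj_onI)
  fix z1 z2 assume z: "z1 \<in> ball 0 (rho1 L1 L2)" "z2 \<in> ball 0 (rho1 L1 L2)" and "F z1 = F z2"
  define r where "r = max (cmod z1) (cmod z2)"
  have "r < rho1 L1 L2" using z by (simp add: r_def)
  then have "r < 1" "remainder_deriv_bound L1 L2 r < 1"
    using rho1_bounds[OF L1_nonneg L2_gt_1] remainder_deriv_bound_less_1[OF L1_nonneg L2_gt_1]
    by auto
  have z_cball: "z1 \<in> cball 0 r" "z2 \<in> cball 0 r" by (simp_all add: r_def)
  then have "F z1 = z1 + remainder G H z1" "F z2 = z2 + remainder G H z2"
    using \<open>r < 1\<close> by (simp_all add: F_eq_remainder)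
  then have "z1 - z2 = remainder G H z2 - remainder G H z1"
    using \<open>F z1 = F z2\<close> by (simp add: algebra_simps)
  then have "cmod (z1 - z2) \<le> remainder_deriv_bound L1 L2 r * cmod (z1 - z2)"
    using remainder_lipschitz[OF \<open>r < 1\<close> z_cball(2,1)] by (simp add: norm_minus_commute)
  then show "z1 = z2"
    using \<open>remainder_deriv_bound L1 L2 r < 1\<close> by (simp add: mult_le_cancel_right1)
qed

lemma F1_radial_le_norm_F:
  assumes "cmod z < 1"
  shows "F1_radial L1 L2 (cmod z) \<le> cmod (F z)"
  using norm_remainder_le[OF assms] norm_diff_ineq[of z "remainder G H z"] F_eq_remainder[OF assms]
  by simp

lemma continuous_on_F: "continuous_on (ball 0 1) F"
proof (rule continuous_on_eq)
  show "continuous_on (ball 0 1) (\<lambda>z. cnj z * G z + H z)"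
    using holomorphic_on_imp_continuous_on[OF G_holomorphic]
      holomorphic_on_imp_continuous_on[OF H_holomorphic]
    by (intro continuous_intros)
  show "cnj z * G z + H z = F z" if "z \<in> ball 0 1" for z
    using F_eq that by simp
qed

lemma ball_sigma1_subset_image: "ball 0 (sigma1 L1 L2) \<subseteq> F ` ball 0 (rho1 L1 L2)"
proof (rule ball_subset_image_ball)
  have rho1: "0 < rho1 L1 L2" "rho1 L1 L2 < 1" by (fact rho1_bounds[OF L1_nonneg L2_gt_1])+
  then show "continuous_on (cball 0 (rho1 L1 L2)) F"
    by (intro continuous_on_subset[OF continuous_on_F]) auto
  show "inj_on F (ball 0 (rho1 L1 L2))" by (rule inj_on_ball_rho1)
  show "0 < rho1 L1 L2" by (fact rho1(1))
  show "F 0 = 0" using F_eq H_0 by simp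
  fix z :: complex assume "cmod z = rho1 L1 L2"
  then have "F1_radial L1 L2 (rho1 L1 L2) \<le> cmod (F z)"
    using F1_radial_le_norm_F[of z] rho1 by simp
  then show "sigma1 L1 L2 \<le> cmod (F z)"
    by (simp add: sigma1_def F1_radial_def)
qed

end

section \<open>The extremal function\<close>

lemma F1_of_real:
  assumes "L2 > 1" "x < L2"
  shows "F1 L1 L2 (of_real x) = of_real (F1_radial L1 L2 x)"
proof -
  have "0 < 1 - x / L2" using assms by simp
  then have "Ln (1 - of_real x / of_real L2) = of_real (ln (1 - x / L2))"
    by (simp flip: Ln_of_real)
  then show ?thesis by (simp add: F1_def F1_radial_def)
qed

lemma F1_not_inj_on:
  assumes "L1 \<ge> 0" "L2 > 1" "rho1 L1 L2 < r" "r \<le> 1"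
  shows "\<not> inj_on (F1 L1 L2) (ball 0 r)"
proof
  assume inj: "inj_on (F1 L1 L2) (ball 0 r)"
  let ?f = "F1_radial L1 L2" and ?\<rho> = "rho1 L1 L2"
  define b where "b = (?\<rho> + r) / 2"
  have rho1: "0 < ?\<rho>" "?\<rho> < b" "b < r"
    using rho1_bounds[OF assms(1,2)] assms(3) by (simp_all add: b_def)
  have "inj_on ?f {0..b}"
  proof (rule inj_onI)
    fix x y assume "x \<in> {0..b}" "y \<in> {0..b}" "?f x = ?f y"
    then have "F1 L1 L2 (of_real x) = F1 L1 L2 (of_real y)"
      and "(of_real x :: complex) \<in> ball 0 r" "(of_real y :: complex) \<in> ball 0 r"
      using rho1 assms by (simp_all add: F1_of_real dist_norm)
    then show "x = y" using inj by (auto dest: inj_onD)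
  qed
  moreover have "continuous_on {0..b} ?f"
    using rho1 assms by (intro F1_radial_continuous_on) auto
  ultimately have "?f 0 < ?f ?\<rho> \<and> ?f ?\<rho> < ?f b \<or> ?f b < ?f ?\<rho> \<and> ?f ?\<rho> < ?f 0"
    using rho1 by (intro continuous_inj_imp_mono) auto
  moreover have "?f 0 < ?f ?\<rho>"
    using rho1 assms by (intro F1_radial_strict_mono) auto
  moreover have "?f b < ?f ?\<rho>"
    using rho1 assms by (intro F1_radial_strict_antimono) auto
  ultimately show False by linarith
qed

lemma norm_F1_rho1:
  assumes "L1 \<ge> 0" "L2 > 1"
  shows "cmod (F1 L1 L2 (of_real (rho1 L1 L2))) = sigma1 L1 L2"
proof -
  have rho1: "0 < rho1 L1 L2" "rho1 L1 L2 < 1" by (fact rho1_bounds[OF assms])+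
  then have "F1_radial L1 L2 0 < F1_radial L1 L2 (rho1 L1 L2)"
    using assms by (intro F1_radial_strict_mono) auto
  then have "0 < F1_radial L1 L2 (rho1 L1 L2)" by (simp add: F1_radial_def)
  moreover have "F1 L1 L2 (of_real (rho1 L1 L2)) = of_real (F1_radial L1 L2 (rho1 L1 L2))"
    using rho1 assms by (intro F1_of_real) auto
  ultimately have "cmod (F1 L1 L2 (of_real (rho1 L1 L2))) = F1_radial L1 L2 (rho1 L1 L2)"
    by (simp only: norm_of_real abs_of_pos)
  then show ?thesis by (simp add: sigma1_def F1_radial_def)
qed

lemma H1_has_field_derivative:
  assumes "L2 > 1" "cmod z < 1"
  shows "((\<lambda>z. of_real (L2\<^sup>2) * z + of_real (L2 ^ 3 - L2) * Ln (1 - z / of_real L2))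
           has_field_derivative of_real L2 * (1 - of_real L2 * z) / (of_real L2 - z)) (at z)"
proof -
  have "Re z < L2" using assms abs_Re_le_cmod[of z] by linarith
  then have nonpos: "1 - z / of_real L2 \<notin> \<real>\<^sub>\<le>\<^sub>0"
    using assms by (auto simp: complex_nonpos_Reals_iff)
  then have "((\<lambda>z. Ln (1 - z / of_real L2)) has_field_derivative
      inverse (1 - z / of_real L2) * (- 1 / of_real L2)) (at z)"
    by (rule DERIV_chain2[OF has_field_derivative_Ln]) (use assms in \<open>auto intro!: derivative_eq_intros\<close>)
  then have deriv: "((\<lambda>z. of_real (L2\<^sup>2) * z + of_real (L2 ^ 3 - L2) * Ln (1 - z / of_real L2))
      has_field_derivative
        of_real (L2\<^sup>2) + of_real (L2 ^ 3 - L2) * (inverse (1 - z / of_real L2) * (- 1 / of_real L2)))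
      (at z)"
    using nonpos assms by (auto intro!: derivative_eq_intros)
  have "of_real L2 - z \<noteq> 0" "(of_real L2 :: complex) \<noteq> 0"
    using \<open>Re z < L2\<close> assms by auto
  then have "of_real (L2\<^sup>2) + of_real (L2 ^ 3 - L2) * (inverse (1 - z / of_real L2) * (- 1 / of_real L2))
      = of_real L2 * (1 - of_real L2 * z) / (of_real L2 - z)"
    by (simp add: field_simps power2_eq_square power3_eq_cube)
  then show ?thesis using deriv by simp
qed

lemma bianalytic_bounded_F1:
  assumes "L1 \<ge> 0" "L2 > 1"
  shows "bianalytic_bounded L1 L2 (\<lambda>z. - of_real L1 * z)
           (\<lambda>z. of_real (L2\<^sup>2) * z + of_real (L2 ^ 3 - L2) * Ln (1 - z / of_real L2)) (F1 L1 L2)"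
proof
  let ?H1 = "\<lambda>z. of_real (L2\<^sup>2) * z + of_real (L2 ^ 3 - L2) * Ln (1 - z / of_real L2)"
  have deriv_H1: "deriv ?H1 z = of_real L2 * (1 - of_real L2 * z) / (of_real L2 - z)"
    if "cmod z < 1" for z
    using H1_has_field_derivative[OF assms(2) that] by (rule DERIV_imp_deriv)
  have deriv_G1: "deriv (\<lambda>z. - of_real L1 * z) z = - of_real L1" for z
    by (rule DERIV_imp_deriv) (auto intro!: derivative_eq_intros)
  show "L1 \<ge> 0" "L2 > 1" by (fact assms)+
  show "(\<lambda>z. - of_real L1 * z) analytic_on ball 0 1"
    by (simp add: analytic_on_open holomorphic_intros)
  have "?H1 holomorphic_on ball 0 1"
    unfolding holomorphic_on_open[OF open_ball]
  proof
    fix z :: complex assume "z \<in> ball 0 1"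
    then have "cmod z < 1" by simp
    then show "\<exists>d. (?H1 has_field_derivative d) (at z)"
      using H1_has_field_derivative[OF assms(2)] by blast
  qed
  then show "?H1 analytic_on ball 0 1"
    by (simp add: analytic_on_open)
  show "- of_real L1 * 0 = 0" "?H1 0 = 0" by simp_all
  show "deriv ?H1 0 = 1" using deriv_H1[of 0] assms by simp
  show "\<forall>z\<in>ball 0 1. cmod (deriv (\<lambda>z. - of_real L1 * z) z) \<le> L1"
    using assms by (simp add: deriv_G1)
  show "\<forall>z\<in>ball 0 1. cmod (deriv ?H1 z) < L2"
  proof
    fix z :: complex assume "z \<in> ball 0 1"
    then have "cmod (1 - of_real L2 * z) < cmod (of_real L2 - z)"
      using assms by (intro norm_one_minus_mult_less) auto
    moreover have "cmod (deriv ?H1 z) = L2 * (cmod (1 - of_real L2 * z) / cmod (of_real L2 - z))"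
      using \<open>z \<in> ball 0 1\<close> deriv_H1 assms by (simp add: norm_mult norm_divide)
    ultimately show "cmod (deriv ?H1 z) < L2"
      using assms by (simp add: divide_less_eq)
  qed
  show "\<forall>z\<in>ball 0 1. F1 L1 L2 z = cnj z * (- of_real L1 * z) + ?H1 z"
    unfolding F1_def complex_norm_square by (simp add: algebra_simps)
qed

theorem theorem2p1:
  fixes L1 L2 :: real and G H F :: "complex \<Rightarrow> complex"
  assumes "L1 \<ge> 0" and "L2 > 1"
    and "G analytic_on ball 0 1" and "H analytic_on ball 0 1"
    and "G 0 = 0" and "H 0 = 0" and "deriv H 0 = 1"
    and "\<forall>z\<in>ball 0 1. cmod (deriv G z) \<le> L1"
    and "\<forall>z\<in>ball 0 1. cmod (deriv H z) < L2"
    and "\<forall>z\<in>ball 0 1. F z = cnj z * G z + H z"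
  shows "inj_on F (ball 0 (rho1 L1 L2))
       \<and> ball 0 (sigma1 L1 L2) \<subseteq> F ` ball 0 (rho1 L1 L2)
       \<and> (let G1 = (\<lambda>z. - of_real L1 * z);
              H1 = (\<lambda>z. of_real (L2\<^sup>2) * z + of_real (L2 ^ 3 - L2) * Ln (1 - z / of_real L2))
          in G1 analytic_on ball 0 1 \<and> H1 analytic_on ball 0 1
             \<and> G1 0 = 0 \<and> H1 0 = 0 \<and> deriv H1 0 = 1
             \<and> (\<forall>z\<in>ball 0 1. cmod (deriv G1 z) \<le> L1)
             \<and> (\<forall>z\<in>ball 0 1. cmod (deriv H1 z) < L2)
             \<and> (\<forall>z\<in>ball 0 1. F1 L1 L2 z = cnj z * G1 z + H1 z))
       \<and> (\<forall>r. rho1 L1 L2 < r \<and> r \<le> 1 \<longrightarrow> \<not> inj_on (F1 L1 L2) (ball 0 r))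
       \<and> cmod (F1 L1 L2 (of_real (rho1 L1 L2))) = sigma1 L1 L2"
proof -
  interpret bianalytic_bounded L1 L2 G H F
    using assms by (rule bianalytic_bounded.intro)
  show ?thesis
    using inj_on_ball_rho1 ball_sigma1_subset_image bianalytic_bounded_F1[OF assms(1,2)]
      F1_not_inj_on[OF assms(1,2)] norm_F1_rho1[OF assms(1,2)]
    unfolding bianalytic_bounded_def Let_def by blast
qed

end
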